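(* Let $\Gamma$ be a group, $\mathcal{S}=\mathcal{S}(\Pi,A,\xi)$ a Gr-category of the type $(\Pi,A)$, and $(\theta,F)$ an enough strict factor set on $\Gamma$ with coefficients in $\mathcal{S}$, with $A$ regarded as a $\Pi$-module $\Gamma$-equivariant via $\sigma x=F^\sigma(x)$ and $F^\sigma(x,a)=(\sigma x,\sigma a)$. Write $\widetilde{F^\sigma}_{x,y}=(\sigma(xy),\tilde f(x,y,\sigma))$ and $\theta^{\sigma,\tau}_x=(\sigma\tau x,t(x,\sigma,\tau))$, and let $h:\Pi^3\cup(\Pi^2\times\Gamma)\cup(\Pi\times\Gamma^2)\to A$ be given by $h|_{\Pi^3}=\xi$, $h|_{\Pi^2\times\Gamma}=\tilde f$, $h|_{\Pi\times\Gamma^2}=t$. Then $h\in Z^3_\Gamma(\Pi,A)$.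
   Context: A Gr-category of the type $(\Pi,A)$ ($\Pi$ a group, $A$ a left $\Pi$-module), $\mathcal{S}(\Pi,A,\xi)$: objects are elements of $\Pi$, morphisms only automorphisms $\mathrm{Aut}(x)=\{x\}\times A$, composition $(x,u)\circ(x,v)=(x,u+v)$, tensor $x\otimes y=xy$, $(x,u)\otimes(y,v)=(xy,u+xv)$, associativity constraint $a_{x,y,z}=(xyz,\xi(x,y,z))$ with $\xi\in Z^3(\Pi,A)$ a normalized 3-cocycle, strict unit constraints (unit $I=1$). Monoidal functors are $F=(F,\widetilde F,\widehat F)$ with $\widetilde F_{x,y}:F(x\otimes y)\to F(x)\otimes F(y)$, $\widehat F:F(I)\to I$. A factor set on $\Gamma$ with coefficients in $\mathcal{S}$: monoidal autoequivalences $F^\sigma$ of $\mathcal{S}$ and isomorphisms of monoidal functors $\theta^{\sigma,\tau}:F^\sigma F^\tau\to F^{\sigma\tau}$ with $F^1=\mathrm{id}$, $\theta^{1,\sigma}=\theta^{\sigma,1}=\mathrm{id}$, $\theta^{\sigma\tau,\gamma}\circ(\theta^{\sigma,\tau}F^\gamma)=\theta^{\sigma,\tau\gamma}\circ(F^\sigma\theta^{\tau,\gamma})$; it is enough strict if $\widehat{F^\sigma}=\mathrm{id}_I$ for all $\sigma$. For such a factor set, each $F^\sigma$ acts by a group automorphism $x\mapsto\sigma x$ of $\Pi$ on objects and by $(x,a)\mapsto(\sigma x,\sigma a)$ on morphisms with $a\mapsto \sigma a$ an automorphism of $A$, these give actions of $\Gamma$ with $\sigma(xa)=(\sigma x)(\sigma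 a)$ (a $\Pi$-module $\Gamma$-equivariant, or $\Gamma$-pair $(\Pi,A)$). For a $\Gamma$-pair $(\Pi,A)$, $Z^3_\Gamma(\Pi,A)$ is the set of normalized maps $h:\Pi^3\cup(\Pi^2\times\Gamma)\cup(\Pi\times\Gamma^2)\to A$ (normalized: $h$ vanishes whenever one of its arguments is the identity element of $\Pi$ or of $\Gamma$) satisfying, for all $x,y,z,t\in\Pi$, $\sigma,\tau,\gamma\in\Gamma$: $h(x,y,zt)+h(xy,z,t)=x\,h(y,z,t)+h(x,yz,t)+h(x,y,z)$; $\sigma h(x,y,z)+h(xy,z,\sigma)+h(x,y,\sigma)=h(\sigma x,\sigma y,\sigma z)+(\sigma x)h(y,z,\sigma)+h(x,yz,\sigma)$; $\sigma h(x,y,\tau)+h(\tau x,\tau y,\sigma)+h(x,\sigma,\tau)+(\sigma\tau x)h(y,\sigma,\tau)=h(x,y,\sigma\tau)+h(xy,\sigma,\tau)$; $\sigma h(x,\tau,\gamma)+h(x,\sigma,\tau\gamma)=h(x,\sigma\tau,\gamma)+h(\gamma x,\sigma,\tau)$. *)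

theory Defs
  imports Main
begin

text \<open>The groups \<Pi> and \<Gamma> are types of class group_add (a not necessarily
commutative group, written additively: the product x y of the paper is x + y, the
identity element is 0).\<close>

definition pi_module :: "('p::group_add \<Rightarrow> 'a::ab_group_add \<Rightarrow> 'a) \<Rightarrow> bool" where
  "pi_module act \<longleftrightarrow>
     (\<forall>a. act 0 a = a) \<and>
     (\<forall>x y a. act (x + y) a = act x (act y a)) \<and>
     (\<forall>x a b. act x (a + b) = act x a + act x b)"

definition normalized_3cocycle ::
  "('p::group_add \<Rightarrow> 'a::ab_group_add \<Rightarrow> 'a) \<Rightarrow> ('p \<Rightarrow> 'p \<Rightarrow> 'p \<Rightarrow> 'a) \<Rightarrow> bool" where
  "normalized_3cocycle act xi \<longleftrightarrow>
     (\<forall>x y z t. xi x y (z + t) + xi (x + y) z t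
                = act x (xi y z t) + xi x (y + z) t + xi x y z) \<and>
     (\<forall>x y. xi 0 x y = 0 \<and> xi x 0 y = 0 \<and> xi x y 0 = 0)"

text \<open>The Gr-category S(\<Pi>,A,\<xi>): objects are elements of \<Pi>, Aut(x) = {x} \<times> A, composition
is addition in A, (x,u) \<otimes> (y,v) = (x+y, u + act x v), associativity constraint
a_{x,y,z} = (x+y+z, \<xi> x y z) : x \<otimes> (y \<otimes> z) \<rightarrow> (x \<otimes> y) \<otimes> z, strict unit constraints.

A functor F : S \<rightarrow> S is given by its object map Fo and, for each object x, the
map Fm x : A \<rightarrow> A with F(x,u) = (Fo x, Fm x u).  A monoidal structure consists of
F~_{x,y} = (Fo (x+y), ft x y) : F(x \<otimes> y) \<rightarrow> F x \<otimes> F y (which forces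
Fo (x+y) = Fo x + Fo y) and F^ = (0, fhat) : F(I) \<rightarrow> I (which forces Fo 0 = 0).\<close>

definition monoidal_functor ::
  "('p::group_add \<Rightarrow> 'a::ab_group_add \<Rightarrow> 'a) \<Rightarrow> ('p \<Rightarrow> 'p \<Rightarrow> 'p \<Rightarrow> 'a) \<Rightarrow>
   ('p \<Rightarrow> 'p) \<Rightarrow> ('p \<Rightarrow> 'a \<Rightarrow> 'a) \<Rightarrow> ('p \<Rightarrow> 'p \<Rightarrow> 'a) \<Rightarrow> 'a \<Rightarrow> bool" where
  "monoidal_functor act xi Fo Fm ft fhat \<longleftrightarrow>
     \<comment> \<open>functor: preserves composition and identities\<close>
     (\<forall>x u v. Fm x (u + v) = Fm x u + Fm x v) \<and>
     (\<forall>x. Fm x 0 = 0) \<and>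
     \<comment> \<open>F~_{x,y} and F^ are morphisms of S (S has only automorphisms)\<close>
     (\<forall>x y. Fo (x + y) = Fo x + Fo y) \<and>
     Fo 0 = 0 \<and>
     \<comment> \<open>naturality of F~: F~ \<circ> F(u \<otimes> v) = (F u \<otimes> F v) \<circ> F~\<close>
     (\<forall>x y u v. ft x y + Fm (x + y) (u + act x v)
                = (Fm x u + act (Fo x) (Fm y v)) + ft x y) \<and>
     \<comment> \<open>compatibility with the associativity constraints:
        a_{Fx,Fy,Fz} \<circ> (id \<otimes> F~_{y,z}) \<circ> F~_{x,y+z}
          = (F~_{x,y} \<otimes> id) \<circ> F~_{x+y,z} \<circ> F(a_{x,y,z})\<close>
     (\<forall>x y z. xi (Fo x) (Fo y) (Fo z) + act (Fo x) (ft y z) + ft x (y + z)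
              = (ft x y + act (Fo x + Fo y) 0) + ft (x + y) z + Fm (x + y + z) (xi x y z)) \<and>
     \<comment> \<open>compatibility with the (strict) unit constraints:
        F(l_x) = l_{Fx} \<circ> (F^ \<otimes> id) \<circ> F~_{0,x},  F(r_x) = r_{Fx} \<circ> (id \<otimes> F^) \<circ> F~_{x,0}\<close>
     (\<forall>x. Fm x 0 = (fhat + act 0 0) + ft 0 x) \<and>
     (\<forall>x. Fm x 0 = (0 + act (Fo x) fhat) + ft x 0)"

text \<open>Since S has only automorphisms, F is essentially surjective iff Fo is
surjective, and fully faithful iff Fo is injective and each Fm x is bijective.\<close>
definition monoidal_autoequivalence ::
  "('p::group_add \<Rightarrow> 'a::ab_group_add \<Rightarrow> 'a) \<Rightarrow> ('p \<Rightarrow> 'p \<Rightarrow> 'p \<Rightarrow> 'a) \<Rightarrow>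
   ('p \<Rightarrow> 'p) \<Rightarrow> ('p \<Rightarrow> 'a \<Rightarrow> 'a) \<Rightarrow> ('p \<Rightarrow> 'p \<Rightarrow> 'a) \<Rightarrow> 'a \<Rightarrow> bool" where
  "monoidal_autoequivalence act xi Fo Fm ft fhat \<longleftrightarrow>
     monoidal_functor act xi Fo Fm ft fhat \<and> bij Fo \<and> (\<forall>x. bij (Fm x))"

text \<open>F^\<sigma> = (Fo \<sigma>, Fm \<sigma>) with F~^\<sigma>_{x,y} = (\<sigma>(x+y), ft x y \<sigma>) and F^^\<sigma> = (0, fhat \<sigma>);
 \<theta>^{\<sigma>,\<tau>}_x = (Fo (\<sigma>+\<tau>) x, t x \<sigma> \<tau>) : F^\<sigma> F^\<tau> x \<rightarrow> F^{\<sigma>\<tau>} x.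
 The composite monoidal functor F^\<sigma> F^\<tau> has
   (F^\<sigma>F^\<tau>)~_{x,y} = F~^\<sigma>_{F^\<tau> x, F^\<tau> y} \<circ> F^\<sigma>(F~^\<tau>_{x,y}),
   (F^\<sigma>F^\<tau>)^ = F^^\<sigma> \<circ> F^\<sigma>(F^^\<tau>).\<close>
definition factor_set ::
  "('p::group_add \<Rightarrow> 'a::ab_group_add \<Rightarrow> 'a) \<Rightarrow> ('p \<Rightarrow> 'p \<Rightarrow> 'p \<Rightarrow> 'a) \<Rightarrow>
   ('g::group_add \<Rightarrow> 'p \<Rightarrow> 'p) \<Rightarrow> ('g \<Rightarrow> 'p \<Rightarrow> 'a \<Rightarrow> 'a) \<Rightarrow>
   ('p \<Rightarrow> 'p \<Rightarrow> 'g \<Rightarrow> 'a) \<Rightarrow> ('g \<Rightarrow> 'a) \<Rightarrow> ('p \<Rightarrow> 'g \<Rightarrow> 'g \<Rightarrow> 'a) \<Rightarrow> bool" where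
  "factor_set act xi Fo Fm ft fhat t \<longleftrightarrow>
     \<comment> \<open>each F^\<sigma> is a monoidal autoequivalence\<close>
     (\<forall>\<sigma>. monoidal_autoequivalence act xi (Fo \<sigma>) (Fm \<sigma>) (\<lambda>x y. ft x y \<sigma>) (fhat \<sigma>)) \<and>
     \<comment> \<open>F^1 = id as monoidal functors\<close>
     (\<forall>x. Fo 0 x = x) \<and> (\<forall>x a. Fm 0 x a = a) \<and> (\<forall>x y. ft x y 0 = 0) \<and> fhat 0 = 0 \<and>
     \<comment> \<open>\<theta>^{\<sigma>,\<tau>} is a morphism of monoidal functors F^\<sigma>F^\<tau> \<rightarrow> F^{\<sigma>\<tau>}
        (it is automatically an isomorphism, all morphisms of S being invertible)\<close>
     (\<forall>\<sigma> \<tau> x. Fo \<sigma> (Fo \<tau> x) = Fo (\<sigma> + \<tau>) x) \<and>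
     (\<forall>\<sigma> \<tau> x u. t x \<sigma> \<tau> + Fm \<sigma> (Fo \<tau> x) (Fm \<tau> x u) = Fm (\<sigma> + \<tau>) x u + t x \<sigma> \<tau>) \<and>
     (\<forall>\<sigma> \<tau> x y. ft x y (\<sigma> + \<tau>) + t (x + y) \<sigma> \<tau>
        = (t x \<sigma> \<tau> + act (Fo (\<sigma> + \<tau>) x) (t y \<sigma> \<tau>))
          + (ft (Fo \<tau> x) (Fo \<tau> y) \<sigma> + Fm \<sigma> (Fo \<tau> (x + y)) (ft x y \<tau>))) \<and>
     (\<forall>\<sigma> \<tau>. fhat (\<sigma> + \<tau>) + t 0 \<sigma> \<tau> = fhat \<sigma> + Fm \<sigma> 0 (fhat \<tau>)) \<and>
     \<comment> \<open>\<theta>^{1,\<sigma>} = \<theta>^{\<sigma>,1} = id\<close>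
     (\<forall>\<sigma> x. t x 0 \<sigma> = 0 \<and> t x \<sigma> 0 = 0) \<and>
     \<comment> \<open>\<theta>^{\<sigma>\<tau>,\<gamma>} \<circ> (\<theta>^{\<sigma>,\<tau>} F^\<gamma>) = \<theta>^{\<sigma>,\<tau>\<gamma>} \<circ> (F^\<sigma> \<theta>^{\<tau>,\<gamma>})\<close>
     (\<forall>\<sigma> \<tau> \<gamma> x. t x (\<sigma> + \<tau>) \<gamma> + t (Fo \<gamma> x) \<sigma> \<tau>
        = t x \<sigma> (\<tau> + \<gamma>) + Fm \<sigma> (Fo (\<tau> + \<gamma>) x) (t x \<tau> \<gamma>))"

definition enough_strict :: "('g \<Rightarrow> 'a::zero) \<Rightarrow> bool" where
  "enough_strict fhat \<longleftrightarrow> (\<forall>\<sigma>. fhat \<sigma> = 0)"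

text \<open>Z^3_\<Gamma>(\<Pi>,A) for a \<Gamma>-pair (\<Pi>,A), with \<Pi> acting on A by act, \<Gamma> acting on \<Pi> by gP
and on A by gA.  A map h on the disjoint union \<Pi>^3 \<union> (\<Pi>^2\<times>\<Gamma>) \<union> (\<Pi>\<times>\<Gamma>^2) is
represented by its three restrictions (h3, h2, h1).\<close>
definition Z3_Gamma ::
  "('p::group_add \<Rightarrow> 'a::ab_group_add \<Rightarrow> 'a) \<Rightarrow> ('g::group_add \<Rightarrow> 'p \<Rightarrow> 'p) \<Rightarrow> ('g \<Rightarrow> 'a \<Rightarrow> 'a) \<Rightarrow>
   (('p \<Rightarrow> 'p \<Rightarrow> 'p \<Rightarrow> 'a) \<times> ('p \<Rightarrow> 'p \<Rightarrow> 'g \<Rightarrow> 'a) \<times> ('p \<Rightarrow> 'g \<Rightarrow> 'g \<Rightarrow> 'a)) set" where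
  "Z3_Gamma act gP gA = {(h3, h2, h1).
     \<comment> \<open>normalized\<close>
     (\<forall>x y. h3 0 x y = 0 \<and> h3 x 0 y = 0 \<and> h3 x y 0 = 0) \<and>
     (\<forall>x \<sigma>. h2 0 x \<sigma> = 0 \<and> h2 x 0 \<sigma> = 0) \<and> (\<forall>x y. h2 x y 0 = 0) \<and>
     (\<forall>\<sigma> \<tau>. h1 0 \<sigma> \<tau> = 0) \<and> (\<forall>x \<sigma>. h1 x 0 \<sigma> = 0 \<and> h1 x \<sigma> 0 = 0) \<and>
     \<comment> \<open>cocycle conditions\<close>
     (\<forall>x y z t. h3 x y (z + t) + h3 (x + y) z t
                = act x (h3 y z t) + h3 x (y + z) t + h3 x y z) \<and>
     (\<forall>x y z \<sigma>. gA \<sigma> (h3 x y z) + h2 (x + y) z \<sigma> + h2 x y \<sigma>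
                = h3 (gP \<sigma> x) (gP \<sigma> y) (gP \<sigma> z) + act (gP \<sigma> x) (h2 y z \<sigma>) + h2 x (y + z) \<sigma>) \<and>
     (\<forall>x y \<sigma> \<tau>. gA \<sigma> (h2 x y \<tau>) + h2 (gP \<tau> x) (gP \<tau> y) \<sigma> + h1 x \<sigma> \<tau>
                  + act (gP (\<sigma> + \<tau>) x) (h1 y \<sigma> \<tau>)
                = h2 x y (\<sigma> + \<tau>) + h1 (x + y) \<sigma> \<tau>) \<and>
     (\<forall>x \<sigma> \<tau> \<gamma>. gA \<sigma> (h1 x \<tau> \<gamma>) + h1 x \<sigma> (\<tau> + \<gamma>)
                = h1 x (\<sigma> + \<tau>) \<gamma> + h1 (gP \<gamma> x) \<sigma> \<tau>)}"

end

theory Submission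
  imports Defs
begin

text \<open>All morphisms of \<open>\<S>(\<Pi>,A,\<xi>)\<close> are automorphisms and \<open>A\<close> is abelian, so naturality of
  \<open>F~\<close> at \<open>(0,u) \<otimes> (y,0)\<close> shows that a monoidal functor acts on \<open>Aut(y)\<close> by one automorphism
  \<open>a \<mapsto> \<sigma>a\<close> independent of \<open>y\<close>, and the unit axioms force \<open>F~_{0,x} = F~_{x,0} = 0\<close> once
  \<open>F^ = 0\<close>.  With these simplifications the compatibility of \<open>F~^\<sigma>\<close> with the associativity
  constraint, the fact that \<open>\<theta>^{\<sigma>,\<tau>}\<close> is monoidal, and the coherence condition on \<open>\<theta>\<close> are
  literally the three mixed cocycle conditions of \<open>Z^3_\<Gamma>(\<Pi>,A)\<close>.\<close>

lemma pi_module_act_zero: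
  assumes "pi_module act"
  shows "act x 0 = 0"
proof -
  have "act x (0 + 0) = act x 0 + act x 0"
    using assms unfolding pi_module_def by blast
  then show ?thesis by simp
qed

lemma monoidal_functor_morphism_map_independent:
  assumes "pi_module act" and "monoidal_functor act xi Fo Fm ft fhat"
  shows "Fm y u = Fm 0 u"
proof -
  have "ft 0 y + Fm (0 + y) (u + act 0 0) = (Fm 0 u + act (Fo 0) (Fm y 0)) + ft 0 y"
    using assms(2) unfolding monoidal_functor_def by blast
  moreover have "Fm y 0 = 0"
    using assms(2) unfolding monoidal_functor_def by blast
  ultimately have "ft 0 y + Fm y u = Fm 0 u + ft 0 y"
    by (simp add: pi_module_act_zero[OF assms(1)])
  then show ?thesis
    by (simp add: add.commute)
qed

lemma monoidal_functor_ft_left_unit: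
  assumes "pi_module act" and "monoidal_functor act xi Fo Fm ft fhat"
  shows "ft 0 x = - fhat"
proof -
  have "Fm x 0 = (fhat + act 0 0) + ft 0 x" and "Fm x 0 = 0"
    using assms(2) unfolding monoidal_functor_def by blast+
  then show ?thesis
    by (simp add: pi_module_act_zero[OF assms(1)] eq_neg_iff_add_eq_0 add.commute)
qed

lemma monoidal_functor_ft_right_unit:
  assumes "monoidal_functor act xi Fo Fm ft fhat"
  shows "ft x 0 = - act (Fo x) fhat"
proof -
  have "Fm x 0 = (0 + act (Fo x) fhat) + ft x 0" and "Fm x 0 = 0"
    using assms unfolding monoidal_functor_def by blast+
  then show ?thesis
    by (simp add: eq_neg_iff_add_eq_0 add.commute)
qed

lemma monoidal_functor_associativity_cocycle:
  assumes "pi_module act" and "monoidal_functor act xi Fo Fm ft fhat"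
  shows "Fm 0 (xi x y z) + ft (x + y) z + ft x y
       = xi (Fo x) (Fo y) (Fo z) + act (Fo x) (ft y z) + ft x (y + z)"
proof -
  have "xi (Fo x) (Fo y) (Fo z) + act (Fo x) (ft y z) + ft x (y + z)
      = (ft x y + act (Fo x + Fo y) 0) + ft (x + y) z + Fm (x + y + z) (xi x y z)"
    using assms(2) unfolding monoidal_functor_def by blast
  then show ?thesis
    unfolding monoidal_functor_morphism_map_independent[OF assms, of "x + y + z"]
    by (simp add: pi_module_act_zero[OF assms(1)] add_ac)
qed

lemma factor_set_monoidal_functor:
  "factor_set act xi Fo Fm ft fhat t \<Longrightarrow>
   monoidal_functor act xi (Fo \<sigma>) (Fm \<sigma>) (\<lambda>x y. ft x y \<sigma>) (fhat \<sigma>)"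
  unfolding factor_set_def monoidal_autoequivalence_def by simp

lemma factor_set_monoidal_transformation_cocycle:
  assumes "pi_module act" and "factor_set act xi Fo Fm ft fhat t"
  shows "Fm \<sigma> 0 (ft x y \<tau>) + ft (Fo \<tau> x) (Fo \<tau> y) \<sigma> + t x \<sigma> \<tau>
           + act (Fo (\<sigma> + \<tau>) x) (t y \<sigma> \<tau>)
       = ft x y (\<sigma> + \<tau>) + t (x + y) \<sigma> \<tau>"
proof -
  have "ft x y (\<sigma> + \<tau>) + t (x + y) \<sigma> \<tau>
      = (t x \<sigma> \<tau> + act (Fo (\<sigma> + \<tau>) x) (t y \<sigma> \<tau>))
        + (ft (Fo \<tau> x) (Fo \<tau> y) \<sigma> + Fm \<sigma> (Fo \<tau> (x + y)) (ft x y \<tau>))"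
    using assms(2) unfolding factor_set_def by blast
  then show ?thesis
    unfolding monoidal_functor_morphism_map_independent
      [OF assms(1) factor_set_monoidal_functor[OF assms(2)], of \<sigma> "Fo \<tau> (x + y)"]
    by (simp add: add_ac)
qed

lemma factor_set_coherence_cocycle:
  assumes "pi_module act" and "factor_set act xi Fo Fm ft fhat t"
  shows "Fm \<sigma> 0 (t x \<tau> \<gamma>) + t x \<sigma> (\<tau> + \<gamma>) = t x (\<sigma> + \<tau>) \<gamma> + t (Fo \<gamma> x) \<sigma> \<tau>"
proof -
  have "t x (\<sigma> + \<tau>) \<gamma> + t (Fo \<gamma> x) \<sigma> \<tau>
      = t x \<sigma> (\<tau> + \<gamma>) + Fm \<sigma> (Fo (\<tau> + \<gamma>) x) (t x \<tau> \<gamma>)"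
    using assms(2) unfolding factor_set_def by blast
  then show ?thesis
    unfolding monoidal_functor_morphism_map_independent
      [OF assms(1) factor_set_monoidal_functor[OF assms(2)], of \<sigma> "Fo (\<tau> + \<gamma>) x"]
    by (simp add: add_ac)
qed

lemma factor_set_transformation_at_unit:
  assumes "factor_set act xi Fo Fm ft fhat t"
  shows "t 0 \<sigma> \<tau> = fhat \<sigma> + Fm \<sigma> 0 (fhat \<tau>) - fhat (\<sigma> + \<tau>)"
proof -
  have "fhat (\<sigma> + \<tau>) + t 0 \<sigma> \<tau> = fhat \<sigma> + Fm \<sigma> 0 (fhat \<tau>)"
    using assms unfolding factor_set_def by blast
  then show ?thesis by (simp add: algebra_simps)
qed

theorem proposition3p4:
  fixes act :: "'p::group_add \<Rightarrow> 'a::ab_group_add \<Rightarrow> 'a"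
    and xi :: "'p \<Rightarrow> 'p \<Rightarrow> 'p \<Rightarrow> 'a"
    and Fo :: "'g::group_add \<Rightarrow> 'p \<Rightarrow> 'p"
    and Fm :: "'g \<Rightarrow> 'p \<Rightarrow> 'a \<Rightarrow> 'a"
    and ft :: "'p \<Rightarrow> 'p \<Rightarrow> 'g \<Rightarrow> 'a"
    and fhat :: "'g \<Rightarrow> 'a"
    and t :: "'p \<Rightarrow> 'g \<Rightarrow> 'g \<Rightarrow> 'a"
  assumes "pi_module act"
    and "normalized_3cocycle act xi"
    and "factor_set act xi Fo Fm ft fhat t"
    and "enough_strict fhat"
  shows "(xi, ft, t) \<in> Z3_Gamma act Fo (\<lambda>\<sigma> a. Fm \<sigma> 0 a)"
proof -
  note F = factor_set_monoidal_functor[OF assms(3)]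
  have fhat_zero: "fhat \<sigma> = 0" for \<sigma>
    using assms(4) unfolding enough_strict_def by blast
  have "ft 0 x \<sigma> = 0" "ft x 0 \<sigma> = 0" for x \<sigma>
    using monoidal_functor_ft_left_unit[OF assms(1) F] monoidal_functor_ft_right_unit[OF F]
    by (simp_all add: fhat_zero pi_module_act_zero[OF assms(1)])
  moreover have "t 0 \<sigma> \<tau> = 0" for \<sigma> \<tau>
    using factor_set_transformation_at_unit[OF assms(3)] F
    by (simp add: fhat_zero monoidal_functor_def)
  moreover have "ft x y 0 = 0" "t x 0 \<sigma> = 0" "t x \<sigma> 0 = 0" for x y \<sigma>
    using assms(3) unfolding factor_set_def by simp_all
  ultimately show ?thesis
    unfolding Z3_Gamma_def
  proof (simp, intro conjI allI)
    show "xi x y (z + w) + xi (x + y) z w = act x (xi y z w) + xi x (y + z) w + xi x y z"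
      "xi 0 x y = 0" "xi x 0 y = 0" "xi x y 0 = 0" for x y z w
      using assms(2) unfolding normalized_3cocycle_def by blast+
  qed (simp_all add: monoidal_functor_associativity_cocycle[OF assms(1) F]
      factor_set_monoidal_transformation_cocycle[OF assms(1,3)]
      factor_set_coherence_cocycle[OF assms(1,3)])
qed

end
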